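(* Let $R$ be a commutative ring with $2=0$, and let $(A,\mathcal{I},\Omega)$ be an axial decomposition algebra over $R$ (with $A$ commutative) with respect to a fusion law $(X,* )$ equipped with a $\mathbb{Z}/2\mathbb{Z}$-grading $\xi$, such that all axes $a_i$ ($i\in\mathcal{I}$) are idempotents. Then every axis is contained in the zero-core $\bigcap_{i\in\mathcal{I}} A^i_{\xi^{-1}(0)}$. In particular, if $A$ is generated (as an algebra) by its axes, then all the $\mathbb{Z}/2\mathbb{Z}$-decompositions are trivial, i.e. $A^i_{\xi^{-1}(1)}=0$ for all $i\in\mathcal{I}$.
   Context: A fusion law is a pair $(X,* )$ with $*\colon X\times X\to 2^X$; $e\in X$ is a unit if $e*x\subseteq\{x\}$ and $x*e\subseteq\{x\}$ for all $x$. A $\Phi$-decomposition of an $R$-algebra $A$ is a direct sum $A=\bigoplus_{x\in X}A_x$ of $R$-modules with $A_xA_y\subseteq A_{x*y}$, where $A_Y=\bigoplus_{y\in Y}A_y$ (so $A_\emptyset=0$). A $\Phi$-decomposition algebra $(A,\mathcal{I},\Omega)$ is an algebra $A$ with a family $\Omega=((A^i_x)_{x\in X})_{i\in\mathcal{I}}$ of $\Phi$-decompositions. Given a distinguished unit $e\in X$ and parameters $\lambda_x\in R$, it is axial if for each $i$ there is a nonzero $a_i\in A^i_e$ (an axis) with $a_ib=\lambda_xb$ for all $x\in X$ and $b\in A^i_x$. A $\mathbb{Z}/2\mathbb{Z}$-grading of $(X,* )$ is a map $\xi\colon X\to\mathbb{Z}/2\mathbb{Z}$ with $\xi(x*y)\subseteq\{\xi(x)+\xi(y)\}$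 for all $x,y$. All algebras are commutative, not necessarily associative or unital. *)

theory Defs
  imports Main "HOL.Modules" "HOL-Library.Z2"
begin

definition comm_algebra :: "('r::comm_ring_1 \<Rightarrow> 'a::ab_group_add \<Rightarrow> 'a) \<Rightarrow> ('a \<Rightarrow> 'a \<Rightarrow> 'a) \<Rightarrow> bool" where
  "comm_algebra smul mul \<longleftrightarrow> module smul
     \<and> (\<forall>u v w. mul (u + v) w = mul u w + mul v w)
     \<and> (\<forall>r u v. mul (smul r u) v = smul r (mul u v))
     \<and> (\<forall>u v. mul u v = mul v u)"

text \<open>A_Y = sum of the submodules A_y, y in Y (so A_{} = 0).\<close>
definition sum_part :: "('x \<Rightarrow> 'a::ab_group_add set) \<Rightarrow> 'x set \<Rightarrow> 'a set" where
  "sum_part D Y = {v. \<exists>S f. finite S \<and> S \<subseteq> Y \<and> (\<forall>y\<in>S. f y \<in> D y) \<and> v = sum f S}"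

text \<open>Internal direct sum decomposition of the module into submodules D x, x ranging over X
  (here the whole type 'x).\<close>
definition direct_sum_decomp :: "('r::comm_ring_1 \<Rightarrow> 'a::ab_group_add \<Rightarrow> 'a) \<Rightarrow> ('x \<Rightarrow> 'a set) \<Rightarrow> bool" where
  "direct_sum_decomp smul D \<longleftrightarrow> (\<forall>x. module.subspace smul (D x))
     \<and> (\<forall>v. \<exists>!f. finite {x. f x \<noteq> 0} \<and> (\<forall>x. f x \<in> D x) \<and> v = sum f {x. f x \<noteq> 0})"

definition fusion_decomp :: "('r::comm_ring_1 \<Rightarrow> 'a::ab_group_add \<Rightarrow> 'a) \<Rightarrow> ('a \<Rightarrow> 'a \<Rightarrow> 'a)
    \<Rightarrow> ('x \<Rightarrow> 'x \<Rightarrow> 'x set) \<Rightarrow> ('x \<Rightarrow> 'a set) \<Rightarrow> bool" where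
  "fusion_decomp smul mul star D \<longleftrightarrow> direct_sum_decomp smul D
     \<and> (\<forall>x y a b. a \<in> D x \<longrightarrow> b \<in> D y \<longrightarrow> mul a b \<in> sum_part D (star x y))"

definition fusion_unit :: "('x \<Rightarrow> 'x \<Rightarrow> 'x set) \<Rightarrow> 'x \<Rightarrow> bool" where
  "fusion_unit star e \<longleftrightarrow> (\<forall>x. star e x \<subseteq> {x} \<and> star x e \<subseteq> {x})"

definition Z2_grading :: "('x \<Rightarrow> 'x \<Rightarrow> 'x set) \<Rightarrow> ('x \<Rightarrow> bit) \<Rightarrow> bool" where
  "Z2_grading star \<xi> \<longleftrightarrow> (\<forall>x y. \<xi> ` star x y \<subseteq> {\<xi> x + \<xi> y})"

definition is_axis :: "('r::comm_ring_1 \<Rightarrow> 'a::ab_group_add \<Rightarrow> 'a) \<Rightarrow> ('a \<Rightarrow> 'a \<Rightarrow> 'a)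
    \<Rightarrow> 'x \<Rightarrow> ('x \<Rightarrow> 'r) \<Rightarrow> ('x \<Rightarrow> 'a set) \<Rightarrow> 'a \<Rightarrow> bool" where
  "is_axis smul mul e lam D a \<longleftrightarrow> a \<noteq> 0 \<and> a \<in> D e
     \<and> (\<forall>x b. b \<in> D x \<longrightarrow> mul a b = smul (lam x) b)"

definition subalgebra :: "('r::comm_ring_1 \<Rightarrow> 'a::ab_group_add \<Rightarrow> 'a) \<Rightarrow> ('a \<Rightarrow> 'a \<Rightarrow> 'a) \<Rightarrow> 'a set \<Rightarrow> bool" where
  "subalgebra smul mul B \<longleftrightarrow> module.subspace smul B \<and> (\<forall>u\<in>B. \<forall>v\<in>B. mul u v \<in> B)"

definition generated_by :: "('r::comm_ring_1 \<Rightarrow> 'a::ab_group_add \<Rightarrow> 'a) \<Rightarrow> ('a \<Rightarrow> 'a \<Rightarrow> 'a) \<Rightarrow> 'a set \<Rightarrow> bool" where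
  "generated_by smul mul G \<longleftrightarrow> (\<forall>B. subalgebra smul mul B \<longrightarrow> G \<subseteq> B \<longrightarrow> B = UNIV)"

end

theory Submission
  imports Defs
begin

text \<open>Split an idempotent a as a = a0 + a1 into its even and odd components with
  respect to the grading. Since 2 = 0 and the product is commutative,
  a = a a = a0 a0 + a1 a1, and both squares are even: every idempotent, in particular
  every axis, lies in the even part of each decomposition. The even part is a subalgebra,
  so if the axes generate A it is all of A, and the directness of the sum forces the odd
  part to vanish.\<close>

lemma sum_part_mono: "Y \<subseteq> Z \<Longrightarrow> sum_part D Y \<subseteq> sum_part D Z"
  unfolding sum_part_def by blast

lemma zero_in_sum_part: "0 \<in> sum_part D Y"
  unfolding sum_part_def by (auto intro!: exI[of _ "{}"])

lemma sum_part_finite_support: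
  assumes v: "v \<in> sum_part D Y" and zero: "\<And>x. 0 \<in> D x"
  obtains f where "finite {x. f x \<noteq> 0}" "\<And>x. f x \<in> D x" "v = sum f {x. f x \<noteq> 0}"
    "{x. f x \<noteq> 0} \<subseteq> Y"
proof -
  obtain S f where S: "finite S" "S \<subseteq> Y" "\<forall>y\<in>S. f y \<in> D y" "v = sum f S"
    using v unfolding sum_part_def by blast
  define f' where "f' y = (if y \<in> S then f y else 0)" for y
  have supp: "{x. f' x \<noteq> 0} \<subseteq> S"
    unfolding f'_def by auto
  have "sum f' {x. f' x \<noteq> 0} = sum f' S"
    by (rule sum.mono_neutral_left[OF S(1) supp]) auto
  also have "\<dots> = v"
    unfolding f'_def S(4) by simp
  finally show thesis
    using that supp S zero finite_subset[OF supp S(1)] by (auto simp: f'_def)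
qed

lemma (in module) subspace_sum_part:
  assumes "\<And>x. subspace (D x)"
  shows "subspace (sum_part D Y)"
proof (rule subspaceI)
  have zero: "0 \<in> D x" for x
    using assms subspace_0 by blast
  show "0 \<in> sum_part D Y"
    by (rule zero_in_sum_part)
  show "u + v \<in> sum_part D Y" if u: "u \<in> sum_part D Y" and v: "v \<in> sum_part D Y" for u v
  proof -
    obtain f where f: "finite {x. f x \<noteq> 0}" "\<And>x. f x \<in> D x" "u = sum f {x. f x \<noteq> 0}"
      "{x. f x \<noteq> 0} \<subseteq> Y"
      using sum_part_finite_support[OF u zero] by blast
    obtain g where g: "finite {x. g x \<noteq> 0}" "\<And>x. g x \<in> D x" "v = sum g {x. g x \<noteq> 0}"
      "{x. g x \<noteq> 0} \<subseteq> Y"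
      using sum_part_finite_support[OF v zero] by blast
    let ?S = "{x. f x \<noteq> 0} \<union> {x. g x \<noteq> 0}"
    have fin: "finite ?S"
      using f(1) g(1) by blast
    have "u = sum f ?S" "v = sum g ?S"
      unfolding f(3) g(3) by (rule sum.mono_neutral_left[OF fin]; auto)+
    then have "u + v = (\<Sum>x\<in>?S. f x + g x)"
      by (simp add: sum.distrib)
    moreover have "f x + g x \<in> D x" for x
      using f(2) g(2) assms subspace_add by blast
    ultimately show ?thesis
      unfolding sum_part_def using f g by (intro CollectI exI[of _ ?S] exI[of _ "\<lambda>x. f x + g x"]) auto
  qed
  show "c *s v \<in> sum_part D Y" if v: "v \<in> sum_part D Y" for c v
  proof -
    obtain S f where S: "finite S" "S \<subseteq> Y" "\<forall>y\<in>S. f y \<in> D y" "v = sum f S"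
      using v unfolding sum_part_def by blast
    have "c *s v = (\<Sum>y\<in>S. c *s f y)"
      using S(4) by (simp add: scale_sum_right)
    moreover have "\<forall>y\<in>S. c *s f y \<in> D y"
      using S(3) assms subspace_scale by blast
    ultimately show ?thesis
      unfolding sum_part_def using S by (intro CollectI exI[of _ S] exI[of _ "\<lambda>y. c *s f y"]) auto
  qed
qed

lemma sum_part_complement_split:
  assumes "direct_sum_decomp smul D"
  obtains u w where "v = u + w" "u \<in> sum_part D Y" "w \<in> sum_part D (- Y)"
proof -
  obtain f where f: "finite {x. f x \<noteq> 0}" "\<forall>x. f x \<in> D x" "v = sum f {x. f x \<noteq> 0}"
    using assms unfolding direct_sum_decomp_def by blast
  let ?S = "{x. f x \<noteq> 0}"
  have "v = sum f (?S \<inter> Y) + sum f (?S - Y)"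
    using f by (simp add: sum.Int_Diff)
  moreover have "sum f (?S \<inter> Y) \<in> sum_part D Y"
    unfolding sum_part_def using f by (intro CollectI exI[of _ "?S \<inter> Y"] exI[of _ f]) auto
  moreover have "sum f (?S - Y) \<in> sum_part D (- Y)"
    unfolding sum_part_def using f by (intro CollectI exI[of _ "?S - Y"] exI[of _ f]) auto
  ultimately show thesis
    using that by blast
qed

lemma sum_part_disjoint:
  assumes "module smul" "direct_sum_decomp smul D" "Y \<inter> Z = {}"
  shows "sum_part D Y \<inter> sum_part D Z = {0}"
proof -
  have zero: "0 \<in> D x" for x
    using assms(1,2) module.subspace_0 unfolding direct_sum_decomp_def by blast
  have "v = 0" if vY: "v \<in> sum_part D Y" and vZ: "v \<in> sum_part D Z" for v
  proof -
    obtain f where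
      f: "finite {x. f x \<noteq> 0}" "\<And>x. f x \<in> D x" "v = sum f {x. f x \<noteq> 0}" "{x. f x \<noteq> 0} \<subseteq> Y"
      using sum_part_finite_support[OF vY zero] by blast
    obtain g where
      g: "finite {x. g x \<noteq> 0}" "\<And>x. g x \<in> D x" "v = sum g {x. g x \<noteq> 0}" "{x. g x \<noteq> 0} \<subseteq> Z"
      using sum_part_finite_support[OF vZ zero] by blast
    have "f = g"
      using assms(2) f g unfolding direct_sum_decomp_def by blast
    then have "{x. f x \<noteq> 0} = {}"
      using f(4) g(4) assms(3) by blast
    then show "v = 0"
      using f(3) by simp
  qed
  then show ?thesis
    using zero_in_sum_part by blast
qed

lemma comm_algebra_module: "comm_algebra smul mul \<Longrightarrow> module smul"
  unfolding comm_algebra_def by blast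

lemma comm_algebra_additive_left: "comm_algebra smul mul \<Longrightarrow> additive (\<lambda>u. mul u w)"
  unfolding comm_algebra_def by unfold_locales blast

lemma comm_algebra_additive_right: "comm_algebra smul mul \<Longrightarrow> additive (mul w)"
  unfolding comm_algebra_def by unfold_locales (metis (no_types))

lemma comm_algebra_mul_sum_sum:
  assumes "comm_algebra smul mul"
  shows "mul (sum f S) (sum g T) = (\<Sum>s\<in>S. \<Sum>t\<in>T. mul (f s) (g t))"
  by (simp add: additive.sum[OF comm_algebra_additive_left[OF assms]]
      additive.sum[OF comm_algebra_additive_right[OF assms]] sum.swap[of _ T])

lemma comm_algebra_square_add:
  assumes "comm_algebra smul mul"
  shows "mul (u + v) (u + v) = mul u u + mul v v + (mul u v + mul u v)"
proof -
  have "mul v u = mul u v"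
    using assms unfolding comm_algebra_def by blast
  then show ?thesis
    using additive.add[OF comm_algebra_additive_left[OF assms]]
      additive.add[OF comm_algebra_additive_right[OF assms]] by (simp add: add_ac)
qed

lemma (in module) add_self_eq_0_if_char_2:
  fixes v :: 'b
  assumes "(2::'a) = 0"
  shows "v + v = 0"
proof -
  have "v + v = (1 + 1) *s v"
    by (simp only: scale_left_distrib scale_one)
  also have "\<dots> = 0"
    using assms by simp
  finally show ?thesis .
qed

lemma fusion_decomp_direct_sum: "fusion_decomp smul mul star D \<Longrightarrow> direct_sum_decomp smul D"
  unfolding fusion_decomp_def by blast

lemma fusion_decomp_subspace:
  "fusion_decomp smul mul star D \<Longrightarrow> module.subspace smul (D x)"
  unfolding fusion_decomp_def direct_sum_decomp_def by blast

lemma fusion_decomp_subspace_sum_part: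
  assumes "comm_algebra smul mul" "fusion_decomp smul mul star D"
  shows "module.subspace smul (sum_part D Y)"
  using module.subspace_sum_part[OF comm_algebra_module[OF assms(1)] fusion_decomp_subspace[OF assms(2)]] .

lemma mul_graded_sum_part:
  assumes alg: "comm_algebra smul mul" and decomp: "fusion_decomp smul mul star D"
    and grading: "Z2_grading star \<xi>"
    and u: "u \<in> sum_part D {x. \<xi> x = c}" and v: "v \<in> sum_part D {x. \<xi> x = d}"
  shows "mul u v \<in> sum_part D {x. \<xi> x = c + d}"
proof -
  obtain S f where S: "finite S" "S \<subseteq> {x. \<xi> x = c}" "\<forall>y\<in>S. f y \<in> D y" "u = sum f S"
    using u unfolding sum_part_def by blast
  obtain T g where T: "finite T" "T \<subseteq> {x. \<xi> x = d}" "\<forall>y\<in>T. g y \<in> D y" "v = sum g T"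
    using v unfolding sum_part_def by blast
  have md: "module smul"
    using comm_algebra_module[OF alg] .
  have sub: "module.subspace smul (sum_part D {x. \<xi> x = c + d})"
    using fusion_decomp_subspace_sum_part[OF alg decomp] .
  have products: "mul (f s) (g t) \<in> sum_part D {x. \<xi> x = c + d}" if "s \<in> S" "t \<in> T" for s t
  proof -
    have "star s t \<subseteq> {x. \<xi> x = c + d}"
      using grading that S(2) T(2) unfolding Z2_grading_def by blast
    moreover have "mul (f s) (g t) \<in> sum_part D (star s t)"
      using decomp that S(3) T(3) unfolding fusion_decomp_def by blast
    ultimately show ?thesis
      using sum_part_mono by blast
  qed
  show ?thesis
    unfolding S(4) T(4) comm_algebra_mul_sum_sum[OF alg]
    by (blast intro: module.subspace_sum[OF md sub] products)
qed

lemma idempotent_in_even_part: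
  assumes char2: "(2::'r::comm_ring_1) = 0"
    and alg: "comm_algebra (smul :: 'r \<Rightarrow> 'a::ab_group_add \<Rightarrow> 'a) mul"
    and decomp: "fusion_decomp smul mul star D" and grading: "Z2_grading star \<xi>"
    and idem: "mul a a = a"
  shows "a \<in> sum_part D {x. \<xi> x = 0}"
proof -
  have md: "module smul"
    using comm_algebra_module[OF alg] .
  have odd: "- {x. \<xi> x = 0} = {x. \<xi> x = 1}"
    by auto
  obtain a\<^sub>0 a\<^sub>1 where a: "a = a\<^sub>0 + a\<^sub>1"
    and a\<^sub>0: "a\<^sub>0 \<in> sum_part D {x. \<xi> x = 0}" and a\<^sub>1: "a\<^sub>1 \<in> sum_part D {x. \<xi> x = 1}"
    using sum_part_complement_split[OF fusion_decomp_direct_sum[OF decomp]] odd by metis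
  have "a = mul a\<^sub>0 a\<^sub>0 + mul a\<^sub>1 a\<^sub>1"
    using idem comm_algebra_square_add[OF alg, of a\<^sub>0 a\<^sub>1]
      module.add_self_eq_0_if_char_2[OF md char2] unfolding a by simp
  moreover have "mul a\<^sub>0 a\<^sub>0 \<in> sum_part D {x. \<xi> x = 0}" "mul a\<^sub>1 a\<^sub>1 \<in> sum_part D {x. \<xi> x = 0}"
    using mul_graded_sum_part[OF alg decomp grading a\<^sub>0 a\<^sub>0]
      mul_graded_sum_part[OF alg decomp grading a\<^sub>1 a\<^sub>1] by simp_all
  ultimately show ?thesis
    using module.subspace_add[OF md fusion_decomp_subspace_sum_part[OF alg decomp]] by metis
qed

lemma subalgebra_even_part:
  assumes "comm_algebra smul mul" "fusion_decomp smul mul star D" "Z2_grading star \<xi>"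
  shows "subalgebra smul mul (sum_part D {x. \<xi> x = 0})"
  unfolding subalgebra_def
  using fusion_decomp_subspace_sum_part mul_graded_sum_part[where c = 0 and d = 0] assms by fastforce

lemma odd_part_trivial_if_generated_by_even:
  assumes alg: "comm_algebra smul mul" and decomp: "fusion_decomp smul mul star D"
    and grading: "Z2_grading star \<xi>"
    and gen: "generated_by smul mul G" and even: "G \<subseteq> sum_part D {x. \<xi> x = 0}"
  shows "sum_part D {x. \<xi> x = 1} = {0}"
proof -
  have "sum_part D {x. \<xi> x = 0} = UNIV"
    using gen even subalgebra_even_part[OF alg decomp grading] unfolding generated_by_def by blast
  moreover have "{x. \<xi> x = 0} \<inter> {x. \<xi> x = 1} = {}"
    by auto
  ultimately show ?thesis
    using sum_part_disjoint[OF comm_algebra_module[OF alg] fusion_decomp_direct_sum[OF decomp]]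
    by (metis Int_UNIV_left)
qed

theorem proposition4p1:
  fixes smul :: "'r::comm_ring_1 \<Rightarrow> 'a::ab_group_add \<Rightarrow> 'a"
    and mul :: "'a \<Rightarrow> 'a \<Rightarrow> 'a"
    and star :: "'x \<Rightarrow> 'x \<Rightarrow> 'x set"
    and e :: 'x and lam :: "'x \<Rightarrow> 'r"
    and \<Omega> :: "'i \<Rightarrow> 'x \<Rightarrow> 'a set"
    and ax :: "'i \<Rightarrow> 'a"
    and \<xi> :: "'x \<Rightarrow> bit"
  assumes char2: "(2::'r) = 0"
    and alg: "comm_algebra smul mul"
    and decomp: "\<forall>i. fusion_decomp smul mul star (\<Omega> i)"
    and unit: "fusion_unit star e"
    and axes: "\<forall>i. is_axis smul mul e lam (\<Omega> i) (ax i)"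
    and idem: "\<forall>i. mul (ax i) (ax i) = ax i"
    and grading: "Z2_grading star \<xi>"
  shows "(\<forall>i j. ax i \<in> sum_part (\<Omega> j) {x. \<xi> x = 0})
    \<and> (generated_by smul mul (range ax) \<longrightarrow> (\<forall>i. sum_part (\<Omega> i) {x. \<xi> x = 1} = {0}))"
proof -
  have even: "ax i \<in> sum_part (\<Omega> j) {x. \<xi> x = 0}" for i j
    using idempotent_in_even_part[OF char2 alg] decomp grading idem by blast
  moreover have "sum_part (\<Omega> j) {x. \<xi> x = 1} = {0}" if "generated_by smul mul (range ax)" for j
    using odd_part_trivial_if_generated_by_even[OF alg _ grading that] decomp even by blast
  ultimately show ?thesis
    by blast
qed

end
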